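(* In the setting described in the context, if type B blowup occurs, then either $0<v_0<1$ and $\omega_0<-\frac{\nu}{2}f_\infty(v_0)$, or $v_0>1$ and $\omega_0>-\frac{\nu}{2}f_\infty(v_0)$.
   Context: Fix $\nu>0$, $v_0>0$ with $v_0\neq1$, and $\omega_0\in\mathbb{R}$. Consider the real ODE system $\frac{d\omega_{-2,i}}{dt}=\omega_{-2,i}^2\frac{1-2v_c^2+5v_c^4}{4v_c^2(1-v_c^2)^2}-\nu\omega_{-2,i}$, $\frac{dv_c}{dt}=-\omega_{-2,i}\frac{1+v_c^2}{4v_c(1-v_c^2)}$ with $v_c(0)=v_0$, $\omega_{-2,i}(0)=\omega_0$; its solution (continued through $v_c=1$) is characterized as follows. Let $F(v)=\frac{v(v^2-1)}{(v^2+1)^2}+\arctan v$, which is a strictly increasing bijection from $(0,\infty)$ onto $(0,\pi/2)$, and let $G(t)=F(v_0)+\frac{2\omega_0 v_0(1-e^{-\nu t})}{\nu(v_0^2-1)(v_0^2+1)^2}$. Then $v_c(t)$ is defined by $F(v_c(t))=G(t)$ for as long as $G(t)\in(0,\pi/2)$, and $\omega_{-2,i}(t)=\omega_0e^{-\nu t}\frac{v_0}{v_c(t)}\frac{v_c(t)^2-1}{v_0^2-1}\left(\frac{v_c(t)^2+1}{v_0^2+1}\right)^2$. Type A blowup means: there is a finite $t_c>0$ with $v_c(t)>0$ on $[0,t_c)$ and $v_c(t)\to0^+$ as $t\to t_c^-$. Type B blowup means: there is a finite $t_c>0$ with $v_c(t)\in(0,\infty)$ on $[0,t_c)$ and $v_c(t)\to+\infty$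 as $t\to t_c^-$. Here $f_0(x)=(x^2-1)^2+\frac{(x^2+1)^2}{x}(x^2-1)\arctan(x)$ and $f_\infty(x)=(x^2-1)^2+\frac{(x^2+1)^2}{x}(x^2-1)\left(\arctan(x)-\frac{\pi}{2}\right)$ for $x>0$. *)

theory Defs
  imports "HOL-Analysis.Analysis"
begin

definition Fv :: "real \<Rightarrow> real" where
  "Fv v = v * (v^2 - 1) / (v^2 + 1)^2 + arctan v"

definition Gt :: "real \<Rightarrow> real \<Rightarrow> real \<Rightarrow> real \<Rightarrow> real" where
  "Gt \<nu> v0 w0 t = Fv v0 + 2 * w0 * v0 * (1 - exp (- \<nu> * t)) / (\<nu> * (v0^2 - 1) * (v0^2 + 1)^2)"

text \<open>The solution component v_c(t): the unique positive v with F v = G t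
  (meaningful as long as G t lies in (0, pi/2)).\<close>
definition vc :: "real \<Rightarrow> real \<Rightarrow> real \<Rightarrow> real \<Rightarrow> real" where
  "vc \<nu> v0 w0 t = (THE v. 0 < v \<and> Fv v = Gt \<nu> v0 w0 t)"

definition f_inf :: "real \<Rightarrow> real" where
  "f_inf x = (x^2 - 1)^2 + ((x^2 + 1)^2 / x) * (x^2 - 1) * (arctan x - pi / 2)"

definition typeB_blowup :: "real \<Rightarrow> real \<Rightarrow> real \<Rightarrow> bool" where
  "typeB_blowup \<nu> v0 w0 \<longleftrightarrow>
     (\<exists>tc > 0. (\<forall>t \<in> {0..<tc}. Gt \<nu> v0 w0 t \<in> {0<..<pi/2}) \<and>
               filterlim (vc \<nu> v0 w0) at_top (at_left tc))"

end

theory Submission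
  imports Defs "HOL-Real_Asymp.Real_Asymp"
begin

text \<open>Along the solution F(v_c(t)) = G(t). Since F v tends to pi/2 as v tends to infinity and G is
  continuous, a type B blowup at t_c forces G(t_c) = pi/2. In t, G moves monotonically from
  G(0) = F(v_0) < pi/2 towards F(v_0) + c with c = 2 w_0 v_0 / (nu (v_0^2 - 1)(v_0^2 + 1)^2), so it
  can reach pi/2 in finite time only if F(v_0) + c > pi/2. Because
  f_inf(v) = (v^2 - 1)(v^2 + 1)^2 / v * (F(v) - pi/2), this inequality is the claimed one, with
  its direction fixed by the sign of v_0^2 - 1.\<close>

lemma power2_plus_one_pos: "0 < (x::real)^2 + 1"
  by (simp add: add_nonneg_pos)

lemma Fv_has_real_derivative: "(Fv has_real_derivative 8 * x^2 / (x^2 + 1)^3) (at x)"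
proof -
  define q where "q = x^2 + 1"
  have q: "q \<noteq> 0" using power2_plus_one_pos[of x] unfolding q_def by linarith
  have num: "((\<lambda>x. x * (x^2 - 1)) has_real_derivative 3 * x^2 - 1) (at x)"
    by (auto intro!: derivative_eq_intros simp: algebra_simps power2_eq_square)
  have den: "((\<lambda>x. (x^2 + 1)^2) has_real_derivative 4 * x * q) (at x)"
    unfolding q_def by (auto intro!: derivative_eq_intros simp: algebra_simps power2_eq_square)
  from DERIV_add[OF DERIV_divide[OF num den] DERIV_arctan]
  have "(Fv has_real_derivative
      ((3 * x^2 - 1) * q^2 - x * (x^2 - 1) * (4 * x * q)) / (q^2 * q^2) + inverse (1 + x^2)) (at x)"
    using q unfolding Fv_def[abs_def] q_def by simp
  moreover have "((3 * x^2 - 1) * q^2 - x * (x^2 - 1) * (4 * x * q)) / (q^2 * q^2) + inverse (1 + x^2)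
      = ((3 * x^2 - 1) * q - x * (x^2 - 1) * (4 * x) + q^2) / q^3"
    using q unfolding add.commute[of 1] q_def[symmetric]
    by (simp add: field_simps power2_eq_square power3_eq_cube)
  moreover have "(3 * x^2 - 1) * q - x * (x^2 - 1) * (4 * x) + q^2 = 8 * x^2"
    unfolding q_def by (simp add: algebra_simps power2_eq_square)
  ultimately show ?thesis unfolding q_def by simp
qed

lemma Fv_strict_mono:
  assumes "0 < a" "a < b"
  shows "Fv a < Fv b"
proof (rule DERIV_pos_imp_increasing[OF assms(2)])
  fix x assume "a \<le> x"
  with assms(1) have "0 < 8 * x^2 / (x^2 + 1)^3"
    by (intro divide_pos_pos zero_less_power power2_plus_one_pos) auto
  with Fv_has_real_derivative show "\<exists>y. (Fv has_real_derivative y) (at x) \<and> 0 < y" by blast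
qed

lemma Fv_0 [simp]: "Fv 0 = 0"
  by (simp add: Fv_def)

lemma isCont_Fv: "isCont Fv x"
  using Fv_has_real_derivative by (rule DERIV_isCont)

lemma tendsto_Fv_at_top: "(Fv \<longlongrightarrow> pi / 2) at_top"
  unfolding Fv_def[abs_def] by real_asymp

lemma Fv_eq_ex1_pos:
  assumes "0 < y" "y < pi / 2"
  shows "\<exists>!v. 0 < v \<and> Fv v = y"
proof -
  have "eventually (\<lambda>x. y < Fv x \<and> 0 \<le> x) at_top"
    by (intro eventually_conj order_tendstoD(1)[OF tendsto_Fv_at_top assms(2)] eventually_ge_at_top)
  then obtain W where W: "y < Fv W" "0 \<le> W"
    using eventually_happens'[OF trivial_limit_at_top_linorder] by blast
  then obtain v where "0 \<le> v" "Fv v = y"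
    using IVT[of Fv 0 y W] isCont_Fv assms(1) by auto
  with assms(1) have v: "0 < v \<and> Fv v = y"
    by (cases "v = 0") auto
  have "u = v" if "0 < u \<and> Fv u = y" for u
    using Fv_strict_mono[of u v] Fv_strict_mono[of v u] that v by (cases u v rule: linorder_cases) auto
  with v show ?thesis by blast
qed

lemma vc_spec:
  assumes "Gt \<nu> v0 w0 t \<in> {0<..<pi/2}"
  shows "0 < vc \<nu> v0 w0 t \<and> Fv (vc \<nu> v0 w0 t) = Gt \<nu> v0 w0 t"
  using theI'[OF Fv_eq_ex1_pos] assms unfolding vc_def by auto

lemma isCont_Gt: "isCont (Gt \<nu> v0 w0) t"
  unfolding Gt_def[abs_def] divide_inverse by (intro continuous_intros)

lemma typeB_blowup_Gt_reaches_pi_half: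
  assumes "typeB_blowup \<nu> v0 w0"
  obtains tc where "0 < tc" "Gt \<nu> v0 w0 0 < pi / 2" "Gt \<nu> v0 w0 tc = pi / 2"
proof -
  from assms obtain tc where tc: "0 < tc"
    and range: "\<And>t. t \<in> {0..<tc} \<Longrightarrow> Gt \<nu> v0 w0 t \<in> {0<..<pi/2}"
    and lim: "filterlim (vc \<nu> v0 w0) at_top (at_left tc)"
    unfolding typeB_blowup_def by blast
  have "((\<lambda>t. Fv (vc \<nu> v0 w0 t)) \<longlongrightarrow> pi / 2) (at_left tc)"
    using filterlim_compose[OF tendsto_Fv_at_top lim] .
  moreover have "eventually (\<lambda>t. Fv (vc \<nu> v0 w0 t) = Gt \<nu> v0 w0 t) (at_left tc)"
    using eventually_at_left_real[OF tc] by eventually_elim (use range vc_spec in auto)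
  ultimately have "(Gt \<nu> v0 w0 \<longlongrightarrow> pi / 2) (at_left tc)"
    by (rule Lim_transform_eventually)
  moreover have "(Gt \<nu> v0 w0 \<longlongrightarrow> Gt \<nu> v0 w0 tc) (at_left tc)"
    using isCont_Gt by (simp add: isCont_def filterlim_at_split)
  ultimately have "Gt \<nu> v0 w0 tc = pi / 2"
    using tendsto_unique trivial_limit_at_left_real by blast
  with tc range[of 0] show thesis by (intro that) auto
qed

lemma f_inf_eq_Fv:
  assumes "v \<noteq> 0"
  shows "f_inf v = (v^2 - 1) * (v^2 + 1)^2 / v * (Fv v - pi / 2)"
proof -
  define p q where "p = v^2 - 1" and "q = v^2 + 1"
  have "q \<noteq> 0" using power2_plus_one_pos[of v] unfolding q_def by linarith
  then have "p^2 + q^2 / v * p * (arctan v - pi / 2) = p * q^2 / v * (v * p / q^2 + arctan v - pi / 2)"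
    using assms by (simp add: field_simps power2_eq_square)
  then show ?thesis unfolding f_inf_def Fv_def p_def q_def .
qed

lemma f_inf_bound_of_threshold:
  fixes \<nu> v0 w0 :: real
  assumes "\<nu> > 0" "v0 > 0" "v0 \<noteq> 1"
    and "pi / 2 - Fv v0 < 2 * w0 * v0 / (\<nu> * (v0^2 - 1) * (v0^2 + 1)^2)"
  shows "(v0 < 1 \<and> w0 < - (\<nu> / 2) * f_inf v0) \<or> (v0 > 1 \<and> w0 > - (\<nu> / 2) * f_inf v0)"
proof -
  define D where "D = \<nu> * (v0^2 - 1) * (v0^2 + 1)^2"
  define \<delta> where "\<delta> = pi / 2 - Fv v0"
  have f: "- (\<nu> / 2) * f_inf v0 = D * \<delta> / (2 * v0)"
    using assms(2) unfolding f_inf_eq_Fv[OF less_imp_neq[OF assms(2), symmetric]] D_def \<delta>_def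
    by (simp add: field_simps)
  have "0 < \<nu> * (v0^2 + 1)^2"
    using assms(1) by (intro mult_pos_pos zero_less_power power2_plus_one_pos)
  then have D: "D = (v0^2 - 1) * (\<nu> * (v0^2 + 1)^2)" "0 < \<nu> * (v0^2 + 1)^2"
    unfolding D_def by (simp_all add: algebra_simps)
  consider "v0 < 1" "D < 0" | "v0 > 1" "D > 0"
  proof (cases "v0 < 1")
    case True
    with assms(2) have "v0^2 < 1" by (simp add: power_less_one_iff)
    with D True show thesis by (intro that(1)) (auto intro: mult_neg_pos)
  next
    case False
    with assms(3) have "1 < v0" by simp
    then have "1 < v0^2" by (simp add: one_less_power)
    with D \<open>1 < v0\<close> show thesis by (intro that(2)) auto
  qed
  then show ?thesis
  proof cases
    case 1
    with assms(2,4) have "2 * w0 * v0 < D * \<delta>"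
      unfolding D_def[symmetric] \<delta>_def[symmetric] by (simp add: neg_less_divide_eq mult.commute)
    with 1 assms(2) show ?thesis unfolding f by (simp add: field_simps)
  next
    case 2
    with assms(2,4) have "D * \<delta> < 2 * w0 * v0"
      unfolding D_def[symmetric] \<delta>_def[symmetric] by (simp add: pos_less_divide_eq mult.commute)
    with 2 assms(2) show ?thesis unfolding f by (simp add: field_simps)
  qed
qed

theorem lemma3p4:
  fixes \<nu> v0 w0 :: real
  assumes "\<nu> > 0" and "v0 > 0" and "v0 \<noteq> 1"
    and "typeB_blowup \<nu> v0 w0"
  shows "(0 < v0 \<and> v0 < 1 \<and> w0 < - (\<nu> / 2) * f_inf v0) \<or>
         (v0 > 1 \<and> w0 > - (\<nu> / 2) * f_inf v0)"
proof -
  obtain tc where tc: "0 < tc" "Gt \<nu> v0 w0 0 < pi / 2" "Gt \<nu> v0 w0 tc = pi / 2"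
    using typeB_blowup_Gt_reaches_pi_half[OF assms(4)] .
  define c where "c = 2 * w0 * v0 / (\<nu> * (v0^2 - 1) * (v0^2 + 1)^2)"
  define s where "s = 1 - exp (- \<nu> * tc)"
  have G: "\<And>t. Gt \<nu> v0 w0 t = Fv v0 + c * (1 - exp (- \<nu> * t))"
    unfolding Gt_def c_def by (simp add: field_simps)
  have "0 < s" "s < 1" using assms(1) tc(1) by (auto simp: s_def)
  have "0 < c * s" using tc(2,3) G[of 0] G[of tc] by (simp add: s_def)
  with \<open>0 < s\<close> \<open>s < 1\<close> have "c * s < c" by (simp add: zero_less_mult_iff)
  with tc(3) G[of tc] have "pi / 2 - Fv v0 < c" by (simp add: s_def)
  from f_inf_bound_of_threshold[OF assms(1-3) this[unfolded c_def]] assms(2) show ?thesis by auto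
qed

end
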